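(* There is no sequence of maps $\varphi_0,\varphi_1,\varphi_2,\ldots$, each defined on the ideal $\mathcal{M}$ of meager subsets of $\mathbb{R}$ and taking values in the family of closed nowhere dense subsets of $\mathbb{R}$, such that both of the following hold: (a) $A\subseteq\bigcup_{i<\omega}\varphi_i(A)$ for every meager $A\subseteq\mathbb{R}$; (b) $\varphi_i(A)\subseteq\varphi_i(B)$ for all meager $A\subseteq B$ and all $i<\omega$. *)

theory Defs
  imports "HOL-Analysis.Analysis"
begin

definition nowhere_dense :: "'a::topological_space set \<Rightarrow> bool" where
  "nowhere_dense S \<longleftrightarrow> interior (closure S) = {}"

definition meager :: "'a::topological_space set \<Rightarrow> bool" where
  "meager A \<longleftrightarrow> (\<exists>N :: nat \<Rightarrow> 'a set. (\<forall>n. nowhere_dense (N n)) \<and> A \<subseteq> (\<Union>n. N n))"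

end

theory Submission
  imports Defs
begin

text \<open>For each \<open>i\<close> consider the points \<open>x\<close> with \<open>x \<in> \<phi>\<^sub>i {x}\<close>; by (a) applied to
  singletons these sets cover \<open>\<real>\<close>. Each of them is nowhere dense: a countable dense subset \<open>D\<close>
  of it is meager, and by monotonicity \<open>D \<subseteq> \<phi>\<^sub>i D\<close>, so its closure lies in the closed nowhere
  dense set \<open>\<phi>\<^sub>i D\<close>. Hence \<open>\<real>\<close> would be meager, contradicting the Baire category theorem.\<close>

lemma nowhere_dense_singleton: "nowhere_dense {x :: 'a :: {t1_space, perfect_space}}"
  unfolding nowhere_dense_def by simp

lemma meager_countable:
  fixes A :: "'a :: {t1_space, perfect_space} set"
  assumes "countable A"
  shows "meager A"
  unfolding meager_def
proof (intro exI conjI allI)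
  show "nowhere_dense {from_nat_into A n}" for n
    by (rule nowhere_dense_singleton)
  show "A \<subseteq> (\<Union>n. {from_nat_into A n})"
    using subset_range_from_nat_into[OF assms] by blast
qed

lemma not_meager_UNIV: "\<not> meager (UNIV :: 'a :: complete_space set)"
proof
  assume "meager (UNIV :: 'a set)"
  then obtain N :: "nat \<Rightarrow> 'a set" where nd: "\<And>n. nowhere_dense (N n)"
    and cover: "UNIV \<subseteq> (\<Union>n. N n)"
    unfolding meager_def by blast
  have "euclidean interior_of \<Union>(range (\<lambda>n. closure (N n))) = {}"
  proof (rule Baire_category_alt)
    show "completely_metrizable_space (euclidean :: 'a topology) \<or>
          locally_compact_space (euclidean :: 'a topology) \<and> regular_space euclidean"
      using completely_metrizable_space_euclidean by blast
    show "closedin euclidean T \<and> euclidean interior_of T = {}"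
      if "T \<in> range (\<lambda>n. closure (N n))" for T
      using that nd by (auto simp: nowhere_dense_def)
  qed simp
  moreover have "\<Union>(range (\<lambda>n. closure (N n))) = UNIV"
    using cover closure_subset by blast
  ultimately show False
    by simp
qed

lemma countable_dense_subset:
  fixes S :: "'a :: second_countable_topology set"
  obtains D where "countable D" "D \<subseteq> S" "S \<subseteq> closure D"
proof -
  obtain \<B> :: "'a set set" where "countable \<B>"
    and basis: "\<And>U. open U \<Longrightarrow> \<exists>\<U>. \<U> \<subseteq> \<B> \<and> U = \<Union>\<U>"
    by (metis univ_second_countable)
  define pick where "pick B = (SOME x. x \<in> B \<inter> S)" for B
  define D where "D = pick ` {B \<in> \<B>. B \<inter> S \<noteq> {}}"
  have pick: "pick B \<in> B \<inter> S" if "B \<inter> S \<noteq> {}" for B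
    unfolding pick_def using that by (metis ex_in_conv someI_ex)
  have "countable D"
    unfolding D_def using \<open>countable \<B>\<close> by simp
  moreover have "D \<subseteq> S"
    unfolding D_def using pick by blast
  moreover have "S \<subseteq> closure D"
  proof
    fix x assume "x \<in> S"
    show "x \<in> closure D"
    proof (clarsimp simp: closure_iff_nhds_not_empty)
      fix U V assume "V \<subseteq> U" "open V" "x \<in> V" "D \<inter> U = {}"
      then obtain B where "B \<in> \<B>" "x \<in> B" "B \<subseteq> V"
        using basis by blast
      with \<open>x \<in> S\<close> have "pick B \<in> D \<inter> U"
        using pick[of B] \<open>V \<subseteq> U\<close> unfolding D_def by blast
      with \<open>D \<inter> U = {}\<close> show False
        by blast
    qed
  qed
  ultimately show thesis
    using that by blast
qed

lemma nowhere_dense_self_covering_points: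
  fixes \<phi> :: "'a :: {t1_space, perfect_space, second_countable_topology} set \<Rightarrow> 'a set"
  assumes closed_nd: "\<And>A. meager A \<Longrightarrow> closed (\<phi> A) \<and> nowhere_dense (\<phi> A)"
    and mono: "\<And>A B. meager A \<Longrightarrow> meager B \<Longrightarrow> A \<subseteq> B \<Longrightarrow> \<phi> A \<subseteq> \<phi> B"
  shows "nowhere_dense {x. x \<in> \<phi> {x}}"
proof -
  obtain D where "countable D" and D_sub: "D \<subseteq> {x. x \<in> \<phi> {x}}"
    and dense: "{x. x \<in> \<phi> {x}} \<subseteq> closure D"
    by (rule countable_dense_subset)
  have "meager D"
    using \<open>countable D\<close> by (rule meager_countable)
  then have "closed (\<phi> D)" and "interior (\<phi> D) = {}"
    using closed_nd[of D] by (auto simp: nowhere_dense_def)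
  have "D \<subseteq> \<phi> D"
  proof
    fix d assume "d \<in> D"
    have "meager {d}"
      by (simp add: meager_countable)
    with \<open>d \<in> D\<close> \<open>meager D\<close> have "\<phi> {d} \<subseteq> \<phi> D"
      by (intro mono) auto
    with \<open>d \<in> D\<close> D_sub show "d \<in> \<phi> D"
      by blast
  qed
  then have "closure D \<subseteq> \<phi> D"
    using \<open>closed (\<phi> D)\<close> by (rule closure_minimal)
  with dense \<open>closed (\<phi> D)\<close> have "closure {x. x \<in> \<phi> {x}} \<subseteq> \<phi> D"
    by (simp add: closure_minimal)
  then have "interior (closure {x. x \<in> \<phi> {x}}) \<subseteq> interior (\<phi> D)"
    by (rule interior_mono)
  with \<open>interior (\<phi> D) = {}\<close> show ?thesis
    unfolding nowhere_dense_def by blast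
qed

theorem mainTheorem2:
  shows "\<not> (\<exists>\<phi> :: nat \<Rightarrow> real set \<Rightarrow> real set.
            (\<forall>i A. meager A \<longrightarrow> closed (\<phi> i A) \<and> nowhere_dense (\<phi> i A)) \<and>
            (\<forall>A. meager A \<longrightarrow> A \<subseteq> (\<Union>i. \<phi> i A)) \<and>
            (\<forall>i A B. meager A \<and> meager B \<and> A \<subseteq> B \<longrightarrow> \<phi> i A \<subseteq> \<phi> i B))"
proof (intro notI, elim exE conjE)
  fix \<phi> :: "nat \<Rightarrow> real set \<Rightarrow> real set"
  assume closed_nd: "\<forall>i A. meager A \<longrightarrow> closed (\<phi> i A) \<and> nowhere_dense (\<phi> i A)"
    and cover: "\<forall>A. meager A \<longrightarrow> A \<subseteq> (\<Union>i. \<phi> i A)"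
    and mono: "\<forall>i A B. meager A \<and> meager B \<and> A \<subseteq> B \<longrightarrow> \<phi> i A \<subseteq> \<phi> i B"
  define S where "S i = {x. x \<in> \<phi> i {x}}" for i
  have "nowhere_dense (S i)" for i
    unfolding S_def using closed_nd mono by (intro nowhere_dense_self_covering_points) auto
  moreover have "UNIV \<subseteq> (\<Union>i. S i)"
  proof
    fix x :: real
    have "x \<in> (\<Union>i. \<phi> i {x})"
      using cover meager_countable[of "{x}"] by blast
    then show "x \<in> (\<Union>i. S i)"
      unfolding S_def by blast
  qed
  ultimately have "meager (UNIV :: real set)"
    unfolding meager_def by (intro exI[of _ S]) simp
  then show False
    using not_meager_UNIV by blast
qed

end
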